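(* Fix a general instance satisfying the unique-default-action assumption, with relevant-action tie-breaking, and a true bias $\alpha^\star\in(0,1]$. At least one of the following holds. 1. There exist constants $c>0$ and $\varepsilon>0$ such that, for every interval $J\subseteq(0,1]$ with $\alpha^\star\in J$ and $|J|\le\varepsilon$, every interval-safe vertex-supported optimizer $\tau$ on $J$ satisfies $P_{\rm info}^J(\tau)\ge c$. 2. There exists a true-bias optimal scheme $\tau^\star$ with $P_{\rm info}^{\alpha^\star}(\tau^\star)=0$.
   Context: General model: finite $\Omega$ and $A$, full-support prior $\mu_0$, utilities $u_S,u_R:A\times\Omega\to\mathbb R$, and $\Delta u_{a,a'}(\omega)=u_R(a,\omega)-u_R(a',\omega)$. A receiver with bias $\alpha\in(0,1]$ best-responds to $(1-\alpha)\mu_0+\alpha\nu$. Action regions. For $\alpha\in(0,1]$ set $b_{a,a'}(\alpha)=\frac{\alpha-1}{\alpha}\Delta u_{a,a'}^\top\mu_0$ and $R_a^\alpha=\{\nu\in\Delta(\Omega):\Delta u_{a,a'}^\top\nu\ge b_{a,a'}(\alpha)\ \forall a'\ne a\}$. For an interval $J=[\underline\alpha,\overline\alpha]\subseteq(0,1]$ set $b_{a,a'}(J)=\max\{b_{a,a'}(\underline\alpha),b_{a,a'}(\overline\alpha)\}$, $R_a^J=\{\nu\in\Delta(\Omega):\Delta u_{a,a'}^\top\nu\ge b_{a,a'}(J)\ \forall a'\ne a\}$, and $\mathrm{int}_{IC}(R_a^J)$ the same set with strict inequalities. Relevant actions: $A_{\rm rel}$ is the set of actions that are the unique maximizer of $\sum_\omega((1-\alpha^\star)\mu_0(\omega)+\alpha^\star\nu(\omega))u_R(\cdot,\omega)$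 for some $\nu\in\Delta(\Omega)$. Tie-breaking: the receiver never picks an action outside $A_{\rm rel}$ and breaks ties among relevant actions in the sender's favor. Unique default action: $\arg\max_a\sum_\omega\mu_0(\omega)u_R(a,\omega)=\{a_0\}$. Schemes. A scheme is a finite list of triples $(p_i,\nu_i,a_i)$ with $p_i\ge0$, $\sum p_i=1$, $\sum p_i\nu_i=\mu_0$, and value $\sum_ip_i\sum_\omega\nu_i(\omega)u_S(a_i,\omega)$. - A true-bias optimal scheme has $a_i\in A_{\rm rel}$, $\nu_i\in R_{a_i}^{\alpha^\star}$, and maximal value among such schemes. - An interval-safe vertex-supported optimizer on $J$ is a scheme with $\mathrm{int}_{IC}(R_{a_i}^J)\ne\emptyset$ and $\nu_i$ a vertex of the polytope $R_{a_i}^J$, whose value equals the supremum of values over all schemes with $\nu_i\in R_{a_i}^J$ and $\mathrm{int}_{IC}(R_{a_i}^J)\neq\emptyset$. Informative posteriors. A pair $(a,a')$ is movable if $\Delta u_{a,a'}^\top\mu_0\ne0$. - $P_{\rm info}^J(\tau)$ is the total mass $p_i$ of atoms such that $\Delta u_{a_i,a'}^\top\nu_i=b_{a_i,a'}(J)$ for some movable pair $(a_i,a')$. - $P_{\rm info}^{\alpha^\star}(\tau)$ is defined the same way with $b_{a_i,a'}(\alpha^\star)$ in place of $b_{a_i,a'}(J)$. *)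

theory Defs
  imports "HOL-Analysis.Analysis"
begin

definition belief :: "real^'w::finite \<Rightarrow> bool" where
  "belief \<nu> \<longleftrightarrow> (\<forall>w. 0 \<le> \<nu> $ w) \<and> (\<Sum>w\<in>UNIV. \<nu> $ w) = 1"

definition du :: "('a \<Rightarrow> 'w::finite \<Rightarrow> real) \<Rightarrow> 'a \<Rightarrow> 'a \<Rightarrow> real^'w \<Rightarrow> real" where
  "du uR a a' \<nu> = (\<Sum>w\<in>UNIV. (uR a w - uR a' w) * \<nu> $ w)"

definition bnd :: "('a \<Rightarrow> 'w::finite \<Rightarrow> real) \<Rightarrow> real^'w \<Rightarrow> 'a \<Rightarrow> 'a \<Rightarrow> real \<Rightarrow> real" where
  "bnd uR \<mu>0 a a' \<alpha> = ((\<alpha> - 1) / \<alpha>) * du uR a a' \<mu>0"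

definition bndJ :: "('a \<Rightarrow> 'w::finite \<Rightarrow> real) \<Rightarrow> real^'w \<Rightarrow> 'a \<Rightarrow> 'a \<Rightarrow> real \<Rightarrow> real \<Rightarrow> real" where
  "bndJ uR \<mu>0 a a' lo hi = max (bnd uR \<mu>0 a a' lo) (bnd uR \<mu>0 a a' hi)"

definition region :: "('a \<Rightarrow> 'w::finite \<Rightarrow> real) \<Rightarrow> real^'w \<Rightarrow> 'a \<Rightarrow> real \<Rightarrow> (real^'w) set" where
  "region uR \<mu>0 a \<alpha> = {\<nu>. belief \<nu> \<and> (\<forall>a'. a' \<noteq> a \<longrightarrow> du uR a a' \<nu> \<ge> bnd uR \<mu>0 a a' \<alpha>)}"

definition regionJ :: "('a \<Rightarrow> 'w::finite \<Rightarrow> real) \<Rightarrow> real^'w \<Rightarrow> 'a \<Rightarrow> real \<Rightarrow> real \<Rightarrow> (real^'w) set" where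
  "regionJ uR \<mu>0 a lo hi = {\<nu>. belief \<nu> \<and> (\<forall>a'. a' \<noteq> a \<longrightarrow> du uR a a' \<nu> \<ge> bndJ uR \<mu>0 a a' lo hi)}"

definition intIC :: "('a \<Rightarrow> 'w::finite \<Rightarrow> real) \<Rightarrow> real^'w \<Rightarrow> 'a \<Rightarrow> real \<Rightarrow> real \<Rightarrow> (real^'w) set" where
  "intIC uR \<mu>0 a lo hi = {\<nu>. belief \<nu> \<and> (\<forall>a'. a' \<noteq> a \<longrightarrow> du uR a a' \<nu> > bndJ uR \<mu>0 a a' lo hi)}"

definition eu :: "('a \<Rightarrow> 'w::finite \<Rightarrow> real) \<Rightarrow> real^'w \<Rightarrow> 'a \<Rightarrow> real" where
  "eu u m a = (\<Sum>w\<in>UNIV. m $ w * u a w)"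

definition relevant :: "('a \<Rightarrow> 'w::finite \<Rightarrow> real) \<Rightarrow> real^'w \<Rightarrow> real \<Rightarrow> 'a set" where
  "relevant uR \<mu>0 \<alpha>s = {a. \<exists>\<nu>. belief \<nu> \<and>
     (\<forall>a'. a' \<noteq> a \<longrightarrow> eu uR ((1 - \<alpha>s) *\<^sub>R \<mu>0 + \<alpha>s *\<^sub>R \<nu>) a' < eu uR ((1 - \<alpha>s) *\<^sub>R \<mu>0 + \<alpha>s *\<^sub>R \<nu>) a)}"

type_synonym ('w, 'a) scheme = "(real \<times> (real^'w) \<times> 'a) list"

definition is_scheme :: "real^'w::finite \<Rightarrow> ('w, 'a) scheme \<Rightarrow> bool" where
  "is_scheme \<mu>0 \<tau> \<longleftrightarrow> (\<forall>(p, \<nu>, a) \<in> set \<tau>. 0 \<le> p) \<and>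
     (\<Sum>i<length \<tau>. fst (\<tau> ! i)) = 1 \<and>
     (\<Sum>i<length \<tau>. fst (\<tau> ! i) *\<^sub>R fst (snd (\<tau> ! i))) = \<mu>0"

definition sched_value :: "('a \<Rightarrow> 'w::finite \<Rightarrow> real) \<Rightarrow> ('w, 'a) scheme \<Rightarrow> real" where
  "sched_value uS \<tau> = (\<Sum>i<length \<tau>. fst (\<tau> ! i) *
      (\<Sum>w\<in>UNIV. fst (snd (\<tau> ! i)) $ w * uS (snd (snd (\<tau> ! i))) w))"

definition true_bias_feasible ::
  "('a \<Rightarrow> 'w::finite \<Rightarrow> real) \<Rightarrow> real^'w \<Rightarrow> real \<Rightarrow> ('w, 'a) scheme \<Rightarrow> bool" where
  "true_bias_feasible uR \<mu>0 \<alpha>s \<tau> \<longleftrightarrow> is_scheme \<mu>0 \<tau> \<and>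
     (\<forall>(p, \<nu>, a) \<in> set \<tau>. a \<in> relevant uR \<mu>0 \<alpha>s \<and> \<nu> \<in> region uR \<mu>0 a \<alpha>s)"

definition true_bias_optimal ::
  "('a \<Rightarrow> 'w::finite \<Rightarrow> real) \<Rightarrow> ('a \<Rightarrow> 'w \<Rightarrow> real) \<Rightarrow> real^'w \<Rightarrow> real \<Rightarrow> ('w, 'a) scheme \<Rightarrow> bool" where
  "true_bias_optimal uS uR \<mu>0 \<alpha>s \<tau> \<longleftrightarrow> true_bias_feasible uR \<mu>0 \<alpha>s \<tau> \<and>
     (\<forall>\<sigma>. true_bias_feasible uR \<mu>0 \<alpha>s \<sigma> \<longrightarrow> sched_value uS \<sigma> \<le> sched_value uS \<tau>)"

definition interval_feasible ::
  "('a \<Rightarrow> 'w::finite \<Rightarrow> real) \<Rightarrow> real^'w \<Rightarrow> real \<Rightarrow> real \<Rightarrow> ('w, 'a) scheme \<Rightarrow> bool" where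
  "interval_feasible uR \<mu>0 lo hi \<tau> \<longleftrightarrow> is_scheme \<mu>0 \<tau> \<and>
     (\<forall>(p, \<nu>, a) \<in> set \<tau>. \<nu> \<in> regionJ uR \<mu>0 a lo hi \<and> intIC uR \<mu>0 a lo hi \<noteq> {})"

definition interval_safe_vertex_opt ::
  "('a \<Rightarrow> 'w::finite \<Rightarrow> real) \<Rightarrow> ('a \<Rightarrow> 'w \<Rightarrow> real) \<Rightarrow> real^'w \<Rightarrow> real \<Rightarrow> real \<Rightarrow> ('w, 'a) scheme \<Rightarrow> bool" where
  "interval_safe_vertex_opt uS uR \<mu>0 lo hi \<tau> \<longleftrightarrow> is_scheme \<mu>0 \<tau> \<and>
     (\<forall>(p, \<nu>, a) \<in> set \<tau>. intIC uR \<mu>0 a lo hi \<noteq> {} \<and> \<nu> extreme_point_of (regionJ uR \<mu>0 a lo hi)) \<and>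
     sched_value uS \<tau> = Sup (sched_value uS ` {\<sigma>. interval_feasible uR \<mu>0 lo hi \<sigma>})"

definition movable :: "('a \<Rightarrow> 'w::finite \<Rightarrow> real) \<Rightarrow> real^'w \<Rightarrow> 'a \<Rightarrow> 'a \<Rightarrow> bool" where
  "movable uR \<mu>0 a a' \<longleftrightarrow> du uR a a' \<mu>0 \<noteq> 0"

definition P_info_J ::
  "('a \<Rightarrow> 'w::finite \<Rightarrow> real) \<Rightarrow> real^'w \<Rightarrow> real \<Rightarrow> real \<Rightarrow> ('w, 'a) scheme \<Rightarrow> real" where
  "P_info_J uR \<mu>0 lo hi \<tau> = (\<Sum>i<length \<tau>.
      if (\<exists>a'. movable uR \<mu>0 (snd (snd (\<tau> ! i))) a' \<and>
               du uR (snd (snd (\<tau> ! i))) a' (fst (snd (\<tau> ! i))) = bndJ uR \<mu>0 (snd (snd (\<tau> ! i))) a' lo hi)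
      then fst (\<tau> ! i) else 0)"

definition P_info_alpha ::
  "('a \<Rightarrow> 'w::finite \<Rightarrow> real) \<Rightarrow> real^'w \<Rightarrow> real \<Rightarrow> ('w, 'a) scheme \<Rightarrow> real" where
  "P_info_alpha uR \<mu>0 \<alpha>s \<tau> = (\<Sum>i<length \<tau>.
      if (\<exists>a'. movable uR \<mu>0 (snd (snd (\<tau> ! i))) a' \<and>
               du uR (snd (snd (\<tau> ! i))) a' (fst (snd (\<tau> ! i))) = bnd uR \<mu>0 (snd (snd (\<tau> ! i))) a' \<alpha>s)
      then fst (\<tau> ! i) else 0)"

end

theory Submission
  imports Defs
begin

text \<open>Suppose the first alternative fails, so that for arbitrarily short intervals J around
  the true bias there are interval-safe vertex optimizers with arbitrarily small informative mass.
  Their value tends to the true-bias optimum: a near-optimal true-bias scheme can be perturbed,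
  by pushing every posterior slightly into the strict interior of its region and restoring the
  prior with a small atom of the default action, into a scheme that is feasible for every short
  enough J. Dropping the informative atoms of such an optimizer leaves a sub-probability
  combination of points (posterior, value) whose posteriors are vertices of the bias-independent
  polytopes cut out by the immovable constraints, and at which no movable constraint binds at the
  true bias. There are only finitely many such points, so their convex hull together with 0 is
  compact; being arbitrarily close to the optimum, it contains a point with mean the prior and
  value at least the optimum. That convex combination is a true-bias optimal scheme without
  informative posteriors.\<close>

section \<open>Beliefs and expected utilities\<close>

lemma du_eq_eu_diff: "du u a a' \<nu> = eu u \<nu> a - eu u \<nu> a'"
  by (simp add: du_def eu_def sum_subtractf algebra_simps)

lemma eu_add [simp]: "eu u (x + y) a = eu u x a + eu u y a"
  by (simp add: eu_def distrib_right sum.distrib)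

lemma eu_scaleR [simp]: "eu u (c *\<^sub>R x) a = c * eu u x a"
  by (simp add: eu_def sum_distrib_left algebra_simps)

lemma eu_diff [simp]: "eu u (x - y) a = eu u x a - eu u y a"
  by (simp add: eu_def left_diff_distrib sum_subtractf)

lemma du_add [simp]: "du u a a' (x + y) = du u a a' x + du u a a' y"
  by (simp add: du_eq_eu_diff)

lemma du_scaleR [simp]: "du u a a' (c *\<^sub>R x) = c * du u a a' x"
  by (simp add: du_eq_eu_diff algebra_simps)

lemma du_diff [simp]: "du u a a' (x - y) = du u a a' x - du u a a' y"
  by (simp add: du_eq_eu_diff)

lemma open_du_gt: "open {\<nu>. c < du u a a' \<nu>}"
  by (intro open_Collect_less continuous_on_const) (unfold du_def, intro continuous_intros)

lemma convex_beliefs: "convex (Collect belief)"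
  by (rule convexI) (auto simp: belief_def sum.distrib sum_distrib_left[symmetric])

lemma belief_nth_le_1:
  assumes "belief \<nu>"
  shows "\<nu> $ w \<le> 1"
proof -
  have "\<nu> $ w \<le> (\<Sum>w'\<in>UNIV. \<nu> $ w')"
    using assms by (intro member_le_sum) (auto simp: belief_def)
  with assms show ?thesis by (simp add: belief_def)
qed

lemma norm_le_1_if_belief: "belief \<nu> \<Longrightarrow> norm \<nu> \<le> 1"
  using norm_le_l1_cart[of \<nu>] by (simp add: belief_def)

definition util_bound :: "('a::finite \<Rightarrow> 'w::finite \<Rightarrow> real) \<Rightarrow> real" where
  "util_bound u = (\<Sum>a\<in>UNIV. \<Sum>w\<in>UNIV. \<bar>u a w\<bar>)"

lemma util_bound_nonneg: "0 \<le> util_bound u"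
  unfolding util_bound_def by (intro sum_nonneg) auto

lemma abs_eu_le_util_bound:
  assumes "belief \<nu>"
  shows "\<bar>eu u \<nu> a\<bar> \<le> util_bound u"
proof -
  have "\<bar>eu u \<nu> a\<bar> \<le> (\<Sum>w\<in>UNIV. \<bar>\<nu> $ w * u a w\<bar>)"
    unfolding eu_def by (rule sum_abs)
  also have "\<dots> \<le> (\<Sum>w\<in>UNIV. \<bar>u a w\<bar>)"
    using assms belief_nth_le_1[OF assms]
    by (intro sum_mono) (auto simp: belief_def abs_mult intro: mult_left_le_one_le)
  also have "\<dots> \<le> util_bound u"
    unfolding util_bound_def by (rule member_le_sum) (auto intro: sum_nonneg)
  finally show ?thesis .
qed

section \<open>Incentive thresholds\<close>

lemma bnd_le_bndJ:
  assumes "0 < lo" "lo \<le> \<alpha>" "\<alpha> \<le> hi"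
  shows "bnd uR \<mu>0 a a' \<alpha> \<le> bndJ uR \<mu>0 a a' lo hi"
proof -
  have mono: "(x - 1) / x \<le> (y - 1) / y" if "0 < x" "x \<le> y" for x y :: real
    using that by (simp add: field_simps)
  show ?thesis
  proof (cases "0 \<le> du uR a a' \<mu>0")
    case True
    then have "bnd uR \<mu>0 a a' \<alpha> \<le> bnd uR \<mu>0 a a' hi"
      using assms mono[of \<alpha> hi] unfolding bnd_def by (intro mult_right_mono) auto
    then show ?thesis by (simp add: bndJ_def)
  next
    case False
    then have "bnd uR \<mu>0 a a' \<alpha> \<le> bnd uR \<mu>0 a a' lo"
      using assms mono[of lo \<alpha>] unfolding bnd_def by (intro mult_right_mono_neg) auto
    then show ?thesis by (simp add: bndJ_def)
  qed
qed

lemma bnd_nonpos: "0 < x \<Longrightarrow> x \<le> 1 \<Longrightarrow> 0 \<le> du uR a a' \<mu>0 \<Longrightarrow> bnd uR \<mu>0 a a' x \<le> 0"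
  unfolding bnd_def by (intro mult_nonpos_nonneg divide_nonpos_pos) auto

lemma bndJ_nonpos:
  "0 < lo \<Longrightarrow> lo \<le> hi \<Longrightarrow> hi \<le> 1 \<Longrightarrow> 0 \<le> du uR a a' \<mu>0 \<Longrightarrow> bndJ uR \<mu>0 a a' lo hi \<le> 0"
  unfolding bndJ_def by (auto intro!: bnd_nonpos)

lemma bndJ_le_bnd_add:
  fixes uR :: "'a::finite \<Rightarrow> 'w::finite \<Rightarrow> real"
  assumes "0 < \<alpha>" "0 < \<delta>"
  obtains \<epsilon> where "0 < \<epsilon>"
    "\<And>lo hi a a'. lo \<le> \<alpha> \<Longrightarrow> \<alpha> \<le> hi \<Longrightarrow> hi - lo \<le> \<epsilon> \<Longrightarrow>
       bndJ uR \<mu>0 a a' lo hi \<le> bnd uR \<mu>0 a a' \<alpha> + \<delta>"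
proof -
  have near: "\<forall>\<^sub>F x in at \<alpha>. bnd uR \<mu>0 a a' x < bnd uR \<mu>0 a a' \<alpha> + \<delta>" for a a'
  proof (rule order_tendstoD(2))
    show "((\<lambda>x. bnd uR \<mu>0 a a' x) \<longlongrightarrow> bnd uR \<mu>0 a a' \<alpha>) (at \<alpha>)"
      unfolding bnd_def using assms(1) by (intro tendsto_intros) auto
  qed (use assms(2) in simp)
  then have "\<forall>\<^sub>F x in at \<alpha>. \<forall>a a'. bnd uR \<mu>0 a a' x < bnd uR \<mu>0 a a' \<alpha> + \<delta>"
    by (intro eventually_all_finite near)
  then obtain \<epsilon> where "0 < \<epsilon>"
    and \<epsilon>: "\<And>x a a'. x \<noteq> \<alpha> \<Longrightarrow> dist x \<alpha> < \<epsilon> \<Longrightarrow> bnd uR \<mu>0 a a' x < bnd uR \<mu>0 a a' \<alpha> + \<delta>"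
    unfolding eventually_at by auto
  have \<epsilon>': "bnd uR \<mu>0 a a' x \<le> bnd uR \<mu>0 a a' \<alpha> + \<delta>" if "dist x \<alpha> < \<epsilon>" for x a a'
    using \<epsilon>[OF _ that] assms(2) by (cases "x = \<alpha>") (auto intro: less_imp_le)
  show ?thesis
  proof (rule that[of "\<epsilon> / 2"])
    fix lo hi a a' assume "lo \<le> \<alpha>" "\<alpha> \<le> hi" "hi - lo \<le> \<epsilon> / 2"
    then have "dist lo \<alpha> < \<epsilon>" "dist hi \<alpha> < \<epsilon>" using \<open>0 < \<epsilon>\<close> by (auto simp: dist_real_def)
    then show "bndJ uR \<mu>0 a a' lo hi \<le> bnd uR \<mu>0 a a' \<alpha> + \<delta>"
      unfolding bndJ_def using \<epsilon>' by simp
  qed (use \<open>0 < \<epsilon>\<close> in simp)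
qed

lemma relevant_iff:
  assumes "0 < \<alpha>"
  shows "a \<in> relevant uR \<mu>0 \<alpha> \<longleftrightarrow>
    (\<exists>\<nu>. belief \<nu> \<and> (\<forall>a'. a' \<noteq> a \<longrightarrow> bnd uR \<mu>0 a a' \<alpha> < du uR a a' \<nu>))"
proof -
  have "eu uR ((1 - \<alpha>) *\<^sub>R \<mu>0 + \<alpha> *\<^sub>R \<nu>) a' < eu uR ((1 - \<alpha>) *\<^sub>R \<mu>0 + \<alpha> *\<^sub>R \<nu>) a
      \<longleftrightarrow> (\<alpha> - 1) * du uR a a' \<mu>0 < \<alpha> * du uR a a' \<nu>" for \<nu> a'
    by (simp add: du_eq_eu_diff algebra_simps)
  moreover have "bnd uR \<mu>0 a a' \<alpha> < du uR a a' \<nu> \<longleftrightarrow> (\<alpha> - 1) * du uR a a' \<mu>0 < \<alpha> * du uR a a' \<nu>"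
    for \<nu> a'
    using assms by (simp add: bnd_def field_simps)
  ultimately show ?thesis unfolding relevant_def by simp
qed

lemma relevant_if_intIC_nonempty:
  assumes "0 < lo" "lo \<le> \<alpha>" "\<alpha> \<le> hi" "intIC uR \<mu>0 a lo hi \<noteq> {}"
  shows "a \<in> relevant uR \<mu>0 \<alpha>"
proof -
  obtain \<nu> where "\<nu> \<in> intIC uR \<mu>0 a lo hi" using assms(4) by blast
  then have "belief \<nu> \<and> (\<forall>a'. a' \<noteq> a \<longrightarrow> bnd uR \<mu>0 a a' \<alpha> < du uR a a' \<nu>)"
    using bnd_le_bndJ[OF assms(1-3)] unfolding intIC_def by (fastforce intro: le_less_trans)
  moreover have "0 < \<alpha>" using assms(1,2) by linarith
  ultimately show ?thesis by (subst relevant_iff) auto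
qed

lemma strict_relevance_margin:
  fixes uR :: "'a::finite \<Rightarrow> 'w::finite \<Rightarrow> real"
  assumes "0 < \<alpha>"
  obtains n g where "0 < g"
    "\<And>a. a \<in> relevant uR \<mu>0 \<alpha> \<Longrightarrow>
       belief (n a) \<and> (\<forall>a'. a' \<noteq> a \<longrightarrow> bnd uR \<mu>0 a a' \<alpha> + g \<le> du uR a a' (n a))"
proof -
  define n where "n a = (SOME \<nu>. belief \<nu> \<and> (\<forall>a'. a' \<noteq> a \<longrightarrow> bnd uR \<mu>0 a a' \<alpha> < du uR a a' \<nu>))"
    for a
  have n: "belief (n a) \<and> (\<forall>a'. a' \<noteq> a \<longrightarrow> bnd uR \<mu>0 a a' \<alpha> < du uR a a' (n a))"
    if "a \<in> relevant uR \<mu>0 \<alpha>" for a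
    using that unfolding relevant_iff[OF assms] n_def by (rule someI_ex)
  define gaps where "gaps = (\<lambda>(a, a'). du uR a a' (n a) - bnd uR \<mu>0 a a' \<alpha>) `
      {(a, a'). a \<in> relevant uR \<mu>0 \<alpha> \<and> a' \<noteq> a}"
  have "finite gaps" unfolding gaps_def by simp
  show ?thesis
  proof (rule that[of "Min (insert 1 gaps)" n])
    show "0 < Min (insert 1 gaps)"
      using \<open>finite gaps\<close> n by (auto simp: gaps_def)
    show "belief (n a) \<and> (\<forall>a'. a' \<noteq> a \<longrightarrow> bnd uR \<mu>0 a a' \<alpha> + Min (insert 1 gaps) \<le> du uR a a' (n a))"
      if "a \<in> relevant uR \<mu>0 \<alpha>" for a
    proof -
      have "bnd uR \<mu>0 a a' \<alpha> + Min (insert 1 gaps) \<le> du uR a a' (n a)" if "a' \<noteq> a" for a'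
      proof -
        have "Min (insert 1 gaps) \<le> du uR a a' (n a) - bnd uR \<mu>0 a a' \<alpha>"
          using \<open>finite gaps\<close> \<open>a \<in> relevant uR \<mu>0 \<alpha>\<close> that by (intro Min_le) (auto simp: gaps_def)
        then show ?thesis by linarith
      qed
      then show ?thesis using n[OF that] by blast
    qed
  qed
qed

section \<open>Schemes as lists of atoms\<close>

lemma sum_lessThan_length_nth: "(\<Sum>i<length xs. f (xs ! i)) = (\<Sum>x\<leftarrow>xs. f x)"
  using sum_list_sum_nth[of "map f xs"] by (simp add: atLeast0LessThan)

lemma scaleR_sum_list: "c *\<^sub>R (\<Sum>x\<leftarrow>xs. f x) = (\<Sum>x\<leftarrow>xs. c *\<^sub>R f x :: 'b::real_vector)"
  by (induction xs) (auto simp: scaleR_right_distrib)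

lemma sum_list_filter_le:
  fixes f :: "'a \<Rightarrow> 'b::ordered_comm_monoid_add"
  shows "\<forall>x\<in>set xs. 0 \<le> f x \<Longrightarrow> sum_list (map f (filter P xs)) \<le> sum_list (map f xs)"
  by (induction xs) (auto intro: add_increasing add_left_mono)

lemma sum_list_scaleR_mem_convex:
  assumes "convex C" "\<forall>(p, x)\<in>set l. 0 \<le> p \<and> x \<in> C" "(\<Sum>(p, x)\<leftarrow>l. p) = 1"
  shows "(\<Sum>(p, x)\<leftarrow>l. p *\<^sub>R x) \<in> C"
proof -
  have "(\<Sum>i<length l. fst (l ! i) *\<^sub>R snd (l ! i)) \<in> C"
    using assms nth_mem[of _ l]
    by (intro convex_sum) (auto simp: split_def sum_lessThan_length_nth[of fst])
  then show ?thesis by (simp add: split_def sum_lessThan_length_nth[symmetric])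
qed

lemma sum_list_scaleR_mem_convex_0:
  assumes "convex C" "0 \<in> C" "\<And>p x. (p, x) \<in> set l \<Longrightarrow> 0 \<le> p \<and> x \<in> C"
    "(\<Sum>(p, x)\<leftarrow>l. p) \<le> 1"
  shows "(\<Sum>(p, x)\<leftarrow>l. p *\<^sub>R x) \<in> C"
  using sum_list_scaleR_mem_convex[OF assms(1), of "l @ [(1 - (\<Sum>(p, x)\<leftarrow>l. p), 0)]"] assms(2,4)
  by (auto dest: assms(3))

lemma belief_sum_list:
  assumes "\<forall>(p, \<nu>)\<in>set l. 0 \<le> p \<and> belief \<nu>" "(\<Sum>(p, \<nu>)\<leftarrow>l. p) = 1"
  shows "belief (\<Sum>(p, \<nu>)\<leftarrow>l. p *\<^sub>R \<nu>)"
  using sum_list_scaleR_mem_convex[OF convex_beliefs, of l] assms by auto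

lemma is_scheme_iff:
  "is_scheme \<mu> \<tau> \<longleftrightarrow> (\<forall>(p, \<nu>, a)\<in>set \<tau>. 0 \<le> p) \<and> (\<Sum>(p, \<nu>, a)\<leftarrow>\<tau>. p) = 1 \<and>
     (\<Sum>(p, \<nu>, a)\<leftarrow>\<tau>. p *\<^sub>R \<nu>) = \<mu>"
  unfolding is_scheme_def by (simp add: split_def sum_lessThan_length_nth[symmetric])

lemma sched_value_eq: "sched_value u \<tau> = (\<Sum>(p, \<nu>, a)\<leftarrow>\<tau>. p * eu u \<nu> a)"
  unfolding sched_value_def eu_def by (simp add: split_def sum_lessThan_length_nth[symmetric])

lemma abs_sum_value_le:
  assumes "\<forall>(p, \<nu>, a)\<in>set \<tau>. 0 \<le> p \<and> belief \<nu>"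
  shows "\<bar>\<Sum>(p, \<nu>, a)\<leftarrow>\<tau>. p * eu u \<nu> a\<bar> \<le> util_bound u * (\<Sum>(p, \<nu>, a)\<leftarrow>\<tau>. p)"
  using assms
proof (induction \<tau>)
  case (Cons x \<tau>)
  obtain p \<nu> a where x: "x = (p, \<nu>, a)" by (cases x) auto
  with Cons.prems have "\<bar>p * eu u \<nu> a\<bar> \<le> util_bound u * p"
    using abs_eu_le_util_bound[of \<nu> u a] by (auto simp: abs_mult mult.commute intro: mult_left_mono)
  with Cons show ?case by (simp add: x distrib_left)
qed simp

lemma abs_sched_value_le:
  assumes "is_scheme \<mu> \<tau>" "\<forall>(p, \<nu>, a)\<in>set \<tau>. belief \<nu>"
  shows "\<bar>sched_value u \<tau>\<bar> \<le> util_bound u"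
  using abs_sum_value_le[of \<tau> u] assms unfolding is_scheme_iff sched_value_eq by fastforce

lemma bdd_above_interval_values:
  fixes u :: "'a::finite \<Rightarrow> 'w::finite \<Rightarrow> real"
  shows "bdd_above (sched_value u ` {\<sigma>. interval_feasible uR \<mu>0 lo hi \<sigma>})"
proof (rule bdd_aboveI2)
  fix \<sigma> assume "\<sigma> \<in> {\<sigma>. interval_feasible uR \<mu>0 lo hi \<sigma>}"
  then show "sched_value u \<sigma> \<le> util_bound u"
    using abs_sched_value_le[of \<mu>0 \<sigma> u] by (fastforce simp: interval_feasible_def regionJ_def)
qed

definition mix_schemes :: "real \<Rightarrow> ('w, 'a) scheme \<Rightarrow> ('w, 'a) scheme \<Rightarrow> ('w, 'a) scheme" where
  "mix_schemes s \<tau> \<rho> = map (\<lambda>(p, x). ((1 - s) * p, x)) \<tau> @ map (\<lambda>(p, x). (s * p, x)) \<rho>"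

lemma is_scheme_mix:
  assumes "is_scheme \<mu> \<tau>" "is_scheme \<mu>' \<rho>" "0 \<le> s" "s \<le> 1"
  shows "is_scheme ((1 - s) *\<^sub>R \<mu> + s *\<^sub>R \<mu>') (mix_schemes s \<tau> \<rho>)"
  using assms unfolding is_scheme_iff mix_schemes_def
  by (auto simp: split_def sum_list_const_mult scaleR_sum_list o_def)

lemma sched_value_mix:
  "sched_value u (mix_schemes s \<tau> \<rho>) = (1 - s) * sched_value u \<tau> + s * sched_value u \<rho>"
  unfolding sched_value_eq mix_schemes_def by (simp add: split_def sum_list_const_mult o_def mult.assoc)

definition shift_posteriors :: "real \<Rightarrow> ('a \<Rightarrow> real^'w) \<Rightarrow> ('w::finite, 'a) scheme \<Rightarrow> ('w, 'a) scheme" where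
  "shift_posteriors t n \<tau> = map (\<lambda>(p, \<nu>, a). (p, (1 - t) *\<^sub>R \<nu> + t *\<^sub>R n a, a)) \<tau>"

lemma is_scheme_shift:
  assumes "is_scheme \<mu> \<tau>"
  shows "is_scheme ((1 - t) *\<^sub>R \<mu> + t *\<^sub>R (\<Sum>(p, \<nu>, a)\<leftarrow>\<tau>. p *\<^sub>R n a)) (shift_posteriors t n \<tau>)"
proof -
  have "(\<Sum>(p, \<nu>, a)\<leftarrow>shift_posteriors t n \<tau>. p *\<^sub>R \<nu>) =
      (1 - t) *\<^sub>R (\<Sum>(p, \<nu>, a)\<leftarrow>\<tau>. p *\<^sub>R \<nu>) + t *\<^sub>R (\<Sum>(p, \<nu>, a)\<leftarrow>\<tau>. p *\<^sub>R n a)"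
    unfolding shift_posteriors_def by (induction \<tau>) (auto simp: algebra_simps)
  with assms show ?thesis
    unfolding is_scheme_iff shift_posteriors_def by (auto simp: split_def o_def)
qed

lemma sched_value_shift:
  "sched_value u (shift_posteriors t n \<tau>) =
     (1 - t) * sched_value u \<tau> + t * (\<Sum>(p, \<nu>, a)\<leftarrow>\<tau>. p * eu u (n a) a)"
  unfolding sched_value_eq shift_posteriors_def by (induction \<tau>) (auto simp: algebra_simps)

definition scheme_point :: "('a \<Rightarrow> 'w::finite \<Rightarrow> real) \<Rightarrow> ('w, 'a) scheme \<Rightarrow> (real^'w) \<times> real" where
  "scheme_point u \<tau> = (\<Sum>(p, \<nu>, a)\<leftarrow>\<tau>. p *\<^sub>R (\<nu>, eu u \<nu> a))"

lemma scheme_point_eq: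
  "scheme_point u \<tau> = ((\<Sum>(p, \<nu>, a)\<leftarrow>\<tau>. p *\<^sub>R \<nu>), (\<Sum>(p, \<nu>, a)\<leftarrow>\<tau>. p * eu u \<nu> a))"
  unfolding scheme_point_def by (induction \<tau>) (auto simp: zero_prod_def)

lemma scheme_point_if_is_scheme: "is_scheme \<mu> \<tau> \<Longrightarrow> scheme_point u \<tau> = (\<mu>, sched_value u \<tau>)"
  by (simp add: scheme_point_eq is_scheme_iff sched_value_eq)

lemma scheme_point_filter_add:
  "scheme_point u (filter P \<tau>) + scheme_point u (filter (\<lambda>x. \<not> P x) \<tau>) = scheme_point u \<tau>"
  unfolding scheme_point_def by (induction \<tau>) (auto simp: add_ac)

lemma norm_scheme_point_le:
  assumes "\<forall>(p, \<nu>, a)\<in>set \<tau>. 0 \<le> p \<and> belief \<nu>"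
  shows "norm (scheme_point u \<tau>) \<le> (1 + util_bound u) * sum_list (map fst \<tau>)"
  using assms
proof (induction \<tau>)
  case (Cons x \<tau>)
  obtain p \<nu> a where x: "x = (p, \<nu>, a)" by (cases x) auto
  with Cons.prems have "0 \<le> p" "belief \<nu>" by auto
  have "norm (\<nu>, eu u \<nu> a) \<le> norm \<nu> + norm (eu u \<nu> a)" by (rule norm_Pair_le)
  also have "\<dots> \<le> 1 + util_bound u"
    using norm_le_1_if_belief[OF \<open>belief \<nu>\<close>] abs_eu_le_util_bound[OF \<open>belief \<nu>\<close>, of u a]
    by simp
  finally have "norm (p *\<^sub>R (\<nu>, eu u \<nu> a)) \<le> (1 + util_bound u) * p"
    unfolding norm_scaleR abs_of_nonneg[OF \<open>0 \<le> p\<close>] mult.commute[of _ p]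
    using \<open>0 \<le> p\<close> by (rule mult_left_mono)
  moreover have "norm (scheme_point u \<tau>) \<le> (1 + util_bound u) * sum_list (map fst \<tau>)"
    by (rule Cons.IH) (use Cons.prems in auto)
  ultimately have "norm (p *\<^sub>R (\<nu>, eu u \<nu> a)) + norm (scheme_point u \<tau>) \<le>
      (1 + util_bound u) * sum_list (map fst (x # \<tau>))"
    by (simp add: x distrib_left)
  moreover have "scheme_point u (x # \<tau>) = p *\<^sub>R (\<nu>, eu u \<nu> a) + scheme_point u \<tau>"
    by (simp add: scheme_point_def x)
  ultimately show ?case
    using norm_triangle_ineq[of "p *\<^sub>R (\<nu>, eu u \<nu> a)" "scheme_point u \<tau>"] by simp
qed (simp add: scheme_point_def)

lemma sum_eq_1_if_mixture_of_beliefs: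
  fixes u :: "(real^'w::finite) \<times> real \<Rightarrow> real"
  assumes "finite A" "\<forall>x\<in>A. belief (fst x)" "belief (\<Sum>x\<in>A. u x *\<^sub>R fst x)"
  shows "(\<Sum>x\<in>A. u x) = 1"
proof -
  have "1 = (\<Sum>w\<in>UNIV. (\<Sum>x\<in>A. u x *\<^sub>R fst x) $ w)" using assms(3) by (simp add: belief_def)
  also have "\<dots> = (\<Sum>w\<in>UNIV. \<Sum>x\<in>A. u x * fst x $ w)" by simp
  also have "\<dots> = (\<Sum>x\<in>A. \<Sum>w\<in>UNIV. u x * fst x $ w)" by (rule sum.swap)
  also have "\<dots> = (\<Sum>x\<in>A. u x * (\<Sum>w\<in>UNIV. fst x $ w))" by (simp add: sum_distrib_left)
  also have "\<dots> = (\<Sum>x\<in>A. u x)" using assms(2) by (simp add: belief_def)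
  finally show ?thesis ..
qed

definition valued_points ::
  "('a \<Rightarrow> 'w::finite \<Rightarrow> real) \<Rightarrow> ((real^'w) \<times> 'a) set \<Rightarrow> ((real^'w) \<times> real) set" where
  "valued_points u G = (\<lambda>(\<nu>, a). (\<nu>, eu u \<nu> a)) ` G"

lemma scheme_from_convex_hull:
  fixes G :: "((real^'w::finite) \<times> 'a) set"
  assumes "finite G" "\<forall>(\<nu>, a)\<in>G. belief \<nu>" "belief \<mu>"
    "(\<mu>, v) \<in> convex hull (insert 0 (valued_points u G))"
  obtains \<tau> where "is_scheme \<mu> \<tau>" "\<forall>(p, x)\<in>set \<tau>. x \<in> G" "sched_value u \<tau> = v"
proof -
  define pts where "pts = valued_points u G"
  have "finite pts" using assms(1) by (simp add: pts_def valued_points_def)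
  have "0 \<notin> pts" using assms(2) by (auto simp: pts_def valued_points_def belief_def zero_prod_def)
  obtain c where c_nonneg: "\<forall>x\<in>insert 0 pts. 0 \<le> c x"
    and "(\<Sum>x\<in>insert 0 pts. c x *\<^sub>R x) = (\<mu>, v)"
    using assms(4) \<open>finite pts\<close> by (auto simp: pts_def convex_hull_finite)
  then have comb: "(\<Sum>x\<in>pts. c x *\<^sub>R x) = (\<mu>, v)"
    using \<open>finite pts\<close> \<open>0 \<notin> pts\<close> by simp
  have pts_belief: "\<forall>x\<in>pts. belief (fst x)" using assms(2) by (auto simp: pts_def valued_points_def)
  have mean: "(\<Sum>x\<in>pts. c x *\<^sub>R fst x) = \<mu>" and val: "(\<Sum>x\<in>pts. c x * snd x) = v"
    using arg_cong[OF comb, of fst] arg_cong[OF comb, of snd] by (simp_all add: fst_sum snd_sum)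
  \<comment> \<open>The nonzero points carry beliefs and mix to the belief mu, so their weights alone sum to 1.\<close>
  have mass: "(\<Sum>x\<in>pts. c x) = 1"
    using sum_eq_1_if_mixture_of_beliefs[OF \<open>finite pts\<close> pts_belief] mean assms(3) by simp
  define f where "f = (\<lambda>(\<nu>, a). (\<nu>, eu u \<nu> a))"
  define pick where "pick = inv_into G f"
  have pick: "pick x \<in> G" "fst (pick x) = fst x" "eu u (fst (pick x)) (snd (pick x)) = snd x"
    if "x \<in> pts" for x
  proof -
    have "x \<in> f ` G" using that by (simp add: pts_def valued_points_def f_def)
    then have "pick x \<in> G" "f (pick x) = x"
      unfolding pick_def by (auto intro: inv_into_into f_inv_into_f)
    then show "pick x \<in> G" "fst (pick x) = fst x" "eu u (fst (pick x)) (snd (pick x)) = snd x"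
      by (cases x, auto simp: f_def split_def)+
  qed
  obtain xs where xs: "set xs = pts" "distinct xs" using finite_distinct_list[OF \<open>finite pts\<close>] by blast
  have sum_xs: "(\<Sum>x\<leftarrow>xs. g x) = (\<Sum>x\<in>pts. g x)" for g :: "_ \<Rightarrow> 'b::comm_monoid_add"
    using sum_list_distinct_conv_sum_set[OF xs(2)] xs(1) by simp
  have "(\<Sum>x\<leftarrow>xs. c x *\<^sub>R fst (pick x)) = \<mu>"
    using mean pick(2) by (simp add: sum_xs cong: sum.cong)
  moreover have "(\<Sum>x\<leftarrow>xs. c x * eu u (fst (pick x)) (snd (pick x))) = v"
    using val pick(3) by (simp add: sum_xs cong: sum.cong)
  moreover have "(\<Sum>x\<leftarrow>xs. c x) = 1" using mass by (simp add: sum_xs)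
  ultimately show ?thesis
    using that[of "map (\<lambda>x. (c x, pick x)) xs"] c_nonneg pick(1) xs(1)
    by (auto simp: is_scheme_iff sched_value_eq split_def o_def)
qed

section \<open>Vertices of the interval regions\<close>

lemma extreme_point_of_if_locally:
  fixes P :: "'a::real_normed_vector set"
  assumes "convex P" "S \<subseteq> P" "x extreme_point_of S" "open U" "x \<in> U" "P \<inter> U \<subseteq> S"
  shows "x extreme_point_of P"
  unfolding extreme_point_of_def
proof (intro conjI ballI notI)
  show "x \<in> P" using assms(2,3) by (auto simp: extreme_point_of_def)
  fix a b assume "a \<in> P" "b \<in> P" "x \<in> open_segment a b"
  then obtain u where "a \<noteq> b" "0 < u" "u < 1" and x: "x = (1 - u) *\<^sub>R a + u *\<^sub>R b"
    by (auto simp: in_segment)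
  obtain e where "0 < e" "ball x e \<subseteq> U" using assms(4,5) open_contains_ball by blast
  define r where "r = e / (e + norm (a - x) + norm (b - x))"
  have den: "0 < e + norm (a - x) + norm (b - x)" using \<open>0 < e\<close> by (simp add: add_pos_nonneg)
  have "0 < r" "r \<le> 1" using \<open>0 < e\<close> den unfolding r_def by (auto simp: field_simps)
  define shrink where "shrink y = (1 - r) *\<^sub>R x + r *\<^sub>R y" for y
  have "shrink y \<in> S" if "y \<in> {a, b}" for y
  proof -
    have "r * norm (y - x) < e"
      using that \<open>0 < e\<close> den unfolding r_def by (auto simp: field_simps add_pos_nonneg)
    moreover have "dist x (shrink y) = r * norm (y - x)"
    proof -
      have "shrink y - x = r *\<^sub>R (y - x)" by (simp add: shrink_def algebra_simps)
      then show ?thesis using \<open>0 < r\<close> by (metis dist_norm dist_commute norm_scaleR abs_of_pos)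
    qed
    ultimately have "shrink y \<in> U" using \<open>ball x e \<subseteq> U\<close> by auto
    moreover have "shrink y \<in> P"
      unfolding shrink_def using that \<open>x \<in> P\<close> \<open>a \<in> P\<close> \<open>b \<in> P\<close> \<open>0 < r\<close> \<open>r \<le> 1\<close>
      by (auto intro: convexD[OF assms(1)])
    ultimately show ?thesis using assms(6) by blast
  qed
  moreover have "x \<in> open_segment (shrink a) (shrink b)"
  proof -
    have "(1 - u) *\<^sub>R shrink a + u *\<^sub>R shrink b = x"
      unfolding shrink_def by (simp add: x algebra_simps)
    moreover have "shrink a \<noteq> shrink b" using \<open>a \<noteq> b\<close> \<open>0 < r\<close> by (simp add: shrink_def)
    ultimately show ?thesis using \<open>0 < u\<close> \<open>u < 1\<close> by (auto simp: in_segment)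
  qed
  ultimately show False using assms(3) by (auto simp: extreme_point_of_def)
qed

text \<open>The constraints of an immovable pair have threshold 0 for every bias. Near a posterior at
  which no movable constraint binds, the interval region therefore coincides with this polytope.\<close>

definition static_region :: "('a \<Rightarrow> 'w::finite \<Rightarrow> real) \<Rightarrow> real^'w \<Rightarrow> 'a \<Rightarrow> (real^'w) set" where
  "static_region uR \<mu>0 a =
     {\<nu>. belief \<nu> \<and> (\<forall>a'. a' \<noteq> a \<and> \<not> movable uR \<mu>0 a a' \<longrightarrow> 0 \<le> du uR a a' \<nu>)}"

lemma bndJ_immovable: "\<not> movable uR \<mu>0 a a' \<Longrightarrow> bndJ uR \<mu>0 a a' lo hi = 0"
  by (simp add: movable_def bndJ_def bnd_def)

lemma polyhedron_static_region:
  fixes uR :: "'a::finite \<Rightarrow> 'w::finite \<Rightarrow> real"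
  shows "polyhedron (static_region uR \<mu>0 a)"
proof -
  have axis: "axis w 1 \<bullet> \<nu> = \<nu> $ w" for w and \<nu> :: "real^'w"
    by (simp add: inner_axis')
  have "static_region uR \<mu>0 a =
      (\<Inter>w. {\<nu>. axis w 1 \<bullet> \<nu> \<ge> 0}) \<inter> {\<nu>. (\<chi> w. 1) \<bullet> \<nu> = 1} \<inter>
      (\<Inter>a'\<in>{a'. a' \<noteq> a \<and> \<not> movable uR \<mu>0 a a'}. {\<nu>. (\<chi> w. uR a w - uR a' w) \<bullet> \<nu> \<ge> 0})"
    unfolding static_region_def belief_def du_def axis by (auto simp: inner_vec_def)
  then show ?thesis
    by (auto intro!: polyhedron_Int polyhedron_Inter polyhedron_halfspace_ge polyhedron_hyperplane)
qed

lemma regionJ_subset_static_region: "regionJ uR \<mu>0 a lo hi \<subseteq> static_region uR \<mu>0 a"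
  unfolding regionJ_def static_region_def using bndJ_immovable by fastforce

definition informative_J ::
  "('a \<Rightarrow> 'w::finite \<Rightarrow> real) \<Rightarrow> real^'w \<Rightarrow> real \<Rightarrow> real \<Rightarrow> real^'w \<Rightarrow> 'a \<Rightarrow> bool" where
  "informative_J uR \<mu>0 lo hi \<nu> a \<longleftrightarrow>
     (\<exists>a'. movable uR \<mu>0 a a' \<and> du uR a a' \<nu> = bndJ uR \<mu>0 a a' lo hi)"

lemma P_info_J_eq:
  "P_info_J uR \<mu>0 lo hi \<tau> =
     (\<Sum>(p, \<nu>, a)\<leftarrow>filter (\<lambda>(p, \<nu>, a). informative_J uR \<mu>0 lo hi \<nu> a) \<tau>. p)"
proof -
  have "P_info_J uR \<mu>0 lo hi \<tau> = (\<Sum>x\<leftarrow>\<tau>. if informative_J uR \<mu>0 lo hi (fst (snd x)) (snd (snd x)) then fst x else 0)"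
    unfolding P_info_J_def informative_J_def by (simp add: sum_lessThan_length_nth[symmetric])
  then show ?thesis unfolding sum_list_map_filter' by (simp add: case_prod_unfold cong: if_cong)
qed

lemma P_info_alpha_eq_0:
  assumes "\<forall>(p, \<nu>, a)\<in>set \<tau>. \<forall>a'. movable uR \<mu>0 a a' \<longrightarrow> du uR a a' \<nu> \<noteq> bnd uR \<mu>0 a a' \<alpha>"
  shows "P_info_alpha uR \<mu>0 \<alpha> \<tau> = 0"
  unfolding P_info_alpha_def
proof (rule sum.neutral, rule ballI)
  fix i assume "i \<in> {..<length \<tau>}"
  then have "\<tau> ! i \<in> set \<tau>" by simp
  with assms show "(if \<exists>a'. movable uR \<mu>0 (snd (snd (\<tau> ! i))) a' \<and>
      du uR (snd (snd (\<tau> ! i))) a' (fst (snd (\<tau> ! i))) = bnd uR \<mu>0 (snd (snd (\<tau> ! i))) a' \<alpha>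
    then fst (\<tau> ! i) else 0) = 0"
    by (cases "\<tau> ! i") auto
qed

lemma extreme_point_of_static_region:
  fixes uR :: "'a::finite \<Rightarrow> 'w::finite \<Rightarrow> real"
  assumes ext: "\<nu> extreme_point_of regionJ uR \<mu>0 a lo hi"
    and not_inf: "\<not> informative_J uR \<mu>0 lo hi \<nu> a"
  shows "\<nu> extreme_point_of static_region uR \<mu>0 a"
proof (rule extreme_point_of_if_locally[OF _ regionJ_subset_static_region ext])
  define U where "U = (\<Inter>a'\<in>{a'. movable uR \<mu>0 a a'}. {x. bndJ uR \<mu>0 a a' lo hi < du uR a a' x})"
  show "convex (static_region uR \<mu>0 a)"
    by (rule polyhedron_imp_convex[OF polyhedron_static_region])
  show "open U"
    unfolding U_def by (rule open_INT) (auto intro: open_du_gt)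
  have movable_ne: "movable uR \<mu>0 a a' \<Longrightarrow> a' \<noteq> a" for a'
    by (auto simp: movable_def du_def)
  show "\<nu> \<in> U"
    using ext not_inf movable_ne
    unfolding U_def extreme_point_of_def regionJ_def informative_J_def by force
  show "static_region uR \<mu>0 a \<inter> U \<subseteq> regionJ uR \<mu>0 a lo hi"
    unfolding U_def static_region_def regionJ_def using bndJ_immovable
    by (force intro: less_imp_le)
qed

definition slack_vertices :: "('a \<Rightarrow> 'w::finite \<Rightarrow> real) \<Rightarrow> real^'w \<Rightarrow> real \<Rightarrow> ((real^'w) \<times> 'a) set" where
  "slack_vertices uR \<mu>0 \<alpha> = {(\<nu>, a). a \<in> relevant uR \<mu>0 \<alpha> \<and> \<nu> \<in> region uR \<mu>0 a \<alpha> \<and>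
     \<nu> extreme_point_of static_region uR \<mu>0 a \<and>
     (\<forall>a'. movable uR \<mu>0 a a' \<longrightarrow> du uR a a' \<nu> \<noteq> bnd uR \<mu>0 a a' \<alpha>)}"

lemma finite_slack_vertices:
  fixes uR :: "'a::finite \<Rightarrow> 'w::finite \<Rightarrow> real"
  shows "finite (slack_vertices uR \<mu>0 \<alpha>)"
proof (rule finite_subset)
  show "slack_vertices uR \<mu>0 \<alpha> \<subseteq> (\<Union>a. (\<lambda>\<nu>. (\<nu>, a)) ` {\<nu>. \<nu> extreme_point_of static_region uR \<mu>0 a})"
    unfolding slack_vertices_def by auto
  show "finite (\<Union>a. (\<lambda>\<nu>. (\<nu>, a)) ` {\<nu>. \<nu> extreme_point_of static_region uR \<mu>0 a})"
    using finite_polyhedron_extreme_points[OF polyhedron_static_region] by auto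
qed

lemma slack_vertex_if_not_informative:
  fixes uR :: "'a::finite \<Rightarrow> 'w::finite \<Rightarrow> real"
  assumes J: "0 < lo" "lo \<le> \<alpha>" "\<alpha> \<le> hi" and safe: "intIC uR \<mu>0 a lo hi \<noteq> {}"
    and ext: "\<nu> extreme_point_of regionJ uR \<mu>0 a lo hi"
    and not_inf: "\<not> informative_J uR \<mu>0 lo hi \<nu> a"
  shows "(\<nu>, a) \<in> slack_vertices uR \<mu>0 \<alpha>"
proof -
  have \<nu>: "\<nu> \<in> regionJ uR \<mu>0 a lo hi" using ext by (simp add: extreme_point_of_def)
  have "bnd uR \<mu>0 a a' \<alpha> \<le> du uR a a' \<nu>" if "a' \<noteq> a" for a'
    using \<nu> bnd_le_bndJ[OF J, of uR \<mu>0 a a'] that unfolding regionJ_def by force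
  then have "\<nu> \<in> region uR \<mu>0 a \<alpha>" using \<nu> by (simp add: regionJ_def region_def)
  moreover have "du uR a a' \<nu> \<noteq> bnd uR \<mu>0 a a' \<alpha>" if "movable uR \<mu>0 a a'" for a'
  proof -
    have "a' \<noteq> a" using that by (auto simp: movable_def du_def)
    then have "bndJ uR \<mu>0 a a' lo hi < du uR a a' \<nu>"
      using \<nu> not_inf that unfolding regionJ_def informative_J_def by force
    then show ?thesis using bnd_le_bndJ[OF J, of uR \<mu>0 a a'] by linarith
  qed
  ultimately show ?thesis
    using relevant_if_intIC_nonempty[OF J safe] extreme_point_of_static_region[OF ext not_inf]
    unfolding slack_vertices_def by blast
qed

lemma slack_part_mem_hull:
  fixes uR :: "'a::finite \<Rightarrow> 'w::finite \<Rightarrow> real"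
  assumes "0 < lo" "lo \<le> \<alpha>" "\<alpha> \<le> hi" "interval_safe_vertex_opt uS uR \<mu>0 lo hi \<tau>"
  shows "scheme_point uS (filter (\<lambda>(p, \<nu>, a). \<not> informative_J uR \<mu>0 lo hi \<nu> a) \<tau>)
    \<in> convex hull (insert 0 (valued_points uS (slack_vertices uR \<mu>0 \<alpha>)))"
proof -
  let ?slack = "filter (\<lambda>(p, \<nu>, a). \<not> informative_J uR \<mu>0 lo hi \<nu> a) \<tau>"
  have \<tau>: "is_scheme \<mu>0 \<tau>" "\<forall>(p, \<nu>, a)\<in>set \<tau>. intIC uR \<mu>0 a lo hi \<noteq> {} \<and>
      \<nu> extreme_point_of regionJ uR \<mu>0 a lo hi"
    using assms(4) by (auto simp: interval_safe_vertex_opt_def)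
  let ?pts = "map (\<lambda>(p, \<nu>, a). (p, (\<nu>, eu uS \<nu> a))) ?slack"
  have pts_mem: "0 \<le> p \<and> x \<in> convex hull (insert 0 (valued_points uS (slack_vertices uR \<mu>0 \<alpha>)))"
    if mem: "(p, x) \<in> set ?pts" for p x
  proof -
    obtain \<nu> a where atom: "(p, \<nu>, a) \<in> set \<tau>" "\<not> informative_J uR \<mu>0 lo hi \<nu> a"
      and x: "x = (\<nu>, eu uS \<nu> a)"
      using mem by auto
    with \<tau>(2) have "(\<nu>, a) \<in> slack_vertices uR \<mu>0 \<alpha>"
      using slack_vertex_if_not_informative[OF assms(1-3)] by fastforce
    then have "x \<in> valued_points uS (slack_vertices uR \<mu>0 \<alpha>)"
      unfolding x valued_points_def by force
    moreover have "0 \<le> p" using \<tau>(1) atom(1) by (fastforce simp: is_scheme_iff)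
    ultimately show ?thesis by (simp add: hull_inc)
  qed
  have pts_weight: "(\<Sum>(p, x)\<leftarrow>?pts. p) \<le> 1"
  proof -
    have "(\<Sum>(p, x)\<leftarrow>?pts. p) = sum_list (map fst ?slack)" by (simp add: o_def split_def)
    also have "\<dots> \<le> sum_list (map fst \<tau>)"
      using \<tau>(1) by (intro sum_list_filter_le) (auto simp: is_scheme_iff)
    finally show ?thesis using \<tau>(1) by (simp add: is_scheme_iff split_def)
  qed
  have "scheme_point uS ?slack = (\<Sum>(p, x)\<leftarrow>?pts. p *\<^sub>R x)"
    by (simp add: scheme_point_def o_def split_def)
  also have "\<dots> \<in> convex hull (insert 0 (valued_points uS (slack_vertices uR \<mu>0 \<alpha>)))"
    using convex_convex_hull hull_inc[OF insertI1] pts_mem pts_weight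
    by (rule sum_list_scaleR_mem_convex_0)
  finally show ?thesis .
qed

lemma dist_slack_part_le:
  assumes "is_scheme \<mu>0 \<tau>" "\<forall>(p, \<nu>, a)\<in>set \<tau>. belief \<nu>"
  shows "dist (scheme_point uS (filter (\<lambda>(p, \<nu>, a). \<not> informative_J uR \<mu>0 lo hi \<nu> a) \<tau>))
      (\<mu>0, sched_value uS \<tau>) \<le> (1 + util_bound uS) * P_info_J uR \<mu>0 lo hi \<tau>"
proof -
  let ?inf = "filter (\<lambda>(p, \<nu>, a). informative_J uR \<mu>0 lo hi \<nu> a) \<tau>"
  have "(\<mu>0, sched_value uS \<tau>) = scheme_point uS ?inf +
      scheme_point uS (filter (\<lambda>(p, \<nu>, a). \<not> informative_J uR \<mu>0 lo hi \<nu> a) \<tau>)"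
    using scheme_point_filter_add[of uS _ \<tau>] scheme_point_if_is_scheme[OF assms(1)]
    by (simp add: split_def)
  then have "dist (scheme_point uS (filter (\<lambda>(p, \<nu>, a). \<not> informative_J uR \<mu>0 lo hi \<nu> a) \<tau>))
      (\<mu>0, sched_value uS \<tau>) = norm (scheme_point uS ?inf)"
    by (simp add: dist_norm)
  also have "\<dots> \<le> (1 + util_bound uS) * sum_list (map fst ?inf)"
    using assms by (intro norm_scheme_point_le) (auto simp: is_scheme_iff)
  finally show ?thesis by (simp add: P_info_J_eq split_def)
qed

section \<open>Perturbing a true-bias scheme into an interval-feasible one\<close>

lemma shifted_posterior_mem_regionJ:
  assumes "\<nu> \<in> region uR \<mu>0 a \<alpha>" "belief n"
    "\<forall>a'. a' \<noteq> a \<longrightarrow> bnd uR \<mu>0 a a' \<alpha> + g \<le> du uR a a' n"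
    "\<forall>a'. bndJ uR \<mu>0 a a' lo hi \<le> bnd uR \<mu>0 a a' \<alpha> + t * g" "0 \<le> t" "t \<le> 1"
  shows "(1 - t) *\<^sub>R \<nu> + t *\<^sub>R n \<in> regionJ uR \<mu>0 a lo hi"
proof -
  have "belief ((1 - t) *\<^sub>R \<nu> + t *\<^sub>R n)"
    using assms(1,2,5,6) convexD[OF convex_beliefs, of \<nu> n "1 - t" t] by (auto simp: region_def)
  moreover have "bndJ uR \<mu>0 a a' lo hi \<le> (1 - t) * du uR a a' \<nu> + t * du uR a a' n"
    if "a' \<noteq> a" for a'
  proof -
    have "(1 - t) * bnd uR \<mu>0 a a' \<alpha> \<le> (1 - t) * du uR a a' \<nu>"
      using assms(1,6) that by (intro mult_left_mono) (auto simp: region_def)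
    moreover have "t * (bnd uR \<mu>0 a a' \<alpha> + g) \<le> t * du uR a a' n"
      using assms(3,5) that by (intro mult_left_mono) auto
    moreover have "(1 - t) * bnd uR \<mu>0 a a' \<alpha> + t * (bnd uR \<mu>0 a a' \<alpha> + g) = bnd uR \<mu>0 a a' \<alpha> + t * g"
      by (simp add: algebra_simps)
    ultimately show ?thesis using spec[OF assms(4), of a'] by linarith
  qed
  ultimately show ?thesis by (simp add: regionJ_def)
qed

lemma margin_point_mem_intIC:
  assumes "belief n" "\<forall>a'. a' \<noteq> a \<longrightarrow> bnd uR \<mu>0 a a' \<alpha> + g \<le> du uR a a' n"
    "\<forall>a'. bndJ uR \<mu>0 a a' lo hi \<le> bnd uR \<mu>0 a a' \<alpha> + t * g" "0 < g" "t < 1"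
  shows "n \<in> intIC uR \<mu>0 a lo hi"
proof -
  have "t * g < g" using assms(4,5) by simp
  then show ?thesis using assms(1-3) unfolding intIC_def by (fastforce intro: le_less_trans)
qed

lemma mixed_value_ge:
  fixes v w e K s t :: real
  assumes "\<bar>v\<bar> \<le> K" "\<bar>w\<bar> \<le> K" "\<bar>e\<bar> \<le> K" "0 \<le> t" "t \<le> s" "s \<le> 1"
  shows "v - 4 * s * K \<le> (1 - s) * ((1 - t) * v + t * w) + s * e"
proof -
  have "0 \<le> (1 - s) * t" "(1 - s) * t \<le> s"
    using assms(4-6) mult_left_le_one_le[of t "1 - s"] by auto
  then have "\<bar>(1 - s) * t * (w - v)\<bar> \<le> s * (2 * K)"
    using assms(1,2) unfolding abs_mult by (intro mult_mono) auto
  moreover have "\<bar>s * (e - v)\<bar> \<le> s * (2 * K)"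
    using assms(1,3-5) unfolding abs_mult by (intro mult_mono) auto
  moreover have "(1 - s) * ((1 - t) * v + t * w) + s * e = v + (1 - s) * t * (w - v) + s * (e - v)"
    by (simp add: algebra_simps)
  ultimately show ?thesis by (simp add: abs_le_iff)
qed

definition interval_safe_atoms ::
  "('a \<Rightarrow> 'w::finite \<Rightarrow> real) \<Rightarrow> real^'w \<Rightarrow> real \<Rightarrow> real \<Rightarrow> ('w, 'a) scheme \<Rightarrow> bool" where
  "interval_safe_atoms uR \<mu>0 lo hi \<tau> \<longleftrightarrow>
     (\<forall>(p, \<nu>, a)\<in>set \<tau>. \<nu> \<in> regionJ uR \<mu>0 a lo hi \<and> intIC uR \<mu>0 a lo hi \<noteq> {})"

lemma interval_feasible_iff:
  "interval_feasible uR \<mu>0 lo hi \<tau> \<longleftrightarrow> is_scheme \<mu>0 \<tau> \<and> interval_safe_atoms uR \<mu>0 lo hi \<tau>"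
  by (simp add: interval_feasible_def interval_safe_atoms_def)

lemma interval_safe_atoms_mix:
  "interval_safe_atoms uR \<mu>0 lo hi \<tau> \<Longrightarrow> interval_safe_atoms uR \<mu>0 lo hi \<rho> \<Longrightarrow>
    interval_safe_atoms uR \<mu>0 lo hi (mix_schemes s \<tau> \<rho>)"
  by (auto simp: interval_safe_atoms_def mix_schemes_def)

lemma interval_safe_atoms_shift:
  assumes "\<forall>(p, \<nu>, a)\<in>set \<tau>. \<nu> \<in> region uR \<mu>0 a \<alpha> \<and> belief (n a) \<and>
      (\<forall>a'. a' \<noteq> a \<longrightarrow> bnd uR \<mu>0 a a' \<alpha> + g \<le> du uR a a' (n a))"
    and close: "\<forall>a a'. bndJ uR \<mu>0 a a' lo hi \<le> bnd uR \<mu>0 a a' \<alpha> + t * g"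
    and "0 < g" "0 \<le> t" "t < 1"
  shows "interval_safe_atoms uR \<mu>0 lo hi (shift_posteriors t n \<tau>)"
  unfolding interval_safe_atoms_def shift_posteriors_def
proof (clarsimp)
  fix p \<nu> a assume "(p, \<nu>, a) \<in> set \<tau>"
  with assms(1) have "\<nu> \<in> region uR \<mu>0 a \<alpha>" and margin: "belief (n a)"
    "\<forall>a'. a' \<noteq> a \<longrightarrow> bnd uR \<mu>0 a a' \<alpha> + g \<le> du uR a a' (n a)"
    by auto
  moreover have "\<forall>a'. bndJ uR \<mu>0 a a' lo hi \<le> bnd uR \<mu>0 a a' \<alpha> + t * g" using close by blast
  ultimately show "(1 - t) *\<^sub>R \<nu> + t *\<^sub>R n a \<in> regionJ uR \<mu>0 a lo hi \<and> intIC uR \<mu>0 a lo hi \<noteq> {}"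
    using shifted_posterior_mem_regionJ margin_point_mem_intIC \<open>0 < g\<close> \<open>0 \<le> t\<close> \<open>t < 1\<close>
    by (metis empty_iff less_imp_le)
qed

lemma sched_value_perturbed_ge:
  assumes "is_scheme \<mu> \<tau>" "\<forall>(p, \<nu>, a)\<in>set \<tau>. belief \<nu> \<and> belief (n a)" "belief y"
    "0 \<le> t" "t \<le> s" "s \<le> 1"
  shows "sched_value u \<tau> - 4 * s * util_bound u \<le>
    sched_value u (mix_schemes s (shift_posteriors t n \<tau>) [(1, y, b)])"
proof -
  have "\<bar>sched_value u \<tau>\<bar> \<le> util_bound u"
    using abs_sched_value_le[OF assms(1)] assms(2) by fastforce
  moreover have "\<bar>\<Sum>(p, \<nu>, a)\<leftarrow>\<tau>. p * eu u (n a) a\<bar> \<le> util_bound u"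
    using abs_sum_value_le[of "map (\<lambda>(p, \<nu>, a). (p, n a, a)) \<tau>" u] assms(1,2)
    by (fastforce simp: is_scheme_iff o_def split_def)
  moreover have "\<bar>eu u y b\<bar> \<le> util_bound u" using abs_eu_le_util_bound[OF assms(3)] .
  ultimately have "sched_value u \<tau> - 4 * s * util_bound u \<le> (1 - s) * ((1 - t) * sched_value u \<tau> +
      t * (\<Sum>(p, \<nu>, a)\<leftarrow>\<tau>. p * eu u (n a) a)) + s * eu u y b"
    using assms(4-6) by (intro mixed_value_ge)
  then show ?thesis by (simp add: sched_value_mix sched_value_shift sched_value_eq[of u "[(1, y, b)]"])
qed

section \<open>The dichotomy\<close>

lemma less_if_unique_argmax:
  fixes f :: "'a \<Rightarrow> 'b::linorder"
  assumes "{a. \<forall>a'. f a' \<le> f a} = {a0}" "a \<noteq> a0"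
  shows "f a < f a0"
proof (rule ccontr)
  have "a0 \<in> {a. \<forall>a'. f a' \<le> f a}" using assms(1) by simp
  moreover assume "\<not> f a < f a0"
  ultimately have "a \<in> {a. \<forall>a'. f a' \<le> f a}" by (auto intro: order_trans)
  with assms show False by simp
qed

locale biased_persuasion =
  fixes \<mu>0 :: "real^'w::finite" and uS uR :: "'a::finite \<Rightarrow> 'w \<Rightarrow> real"
    and \<alpha>s :: real and a0 :: 'a
  assumes full_support: "\<And>w. 0 < \<mu>0 $ w" and prior_sum: "(\<Sum>w\<in>UNIV. \<mu>0 $ w) = 1"
    and default_strict: "\<And>a. a \<noteq> a0 \<Longrightarrow> eu uR \<mu>0 a < eu uR \<mu>0 a0"
    and alpha_pos: "0 < \<alpha>s" and alpha_le_1: "\<alpha>s \<le> 1"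
begin

definition opt_value :: real where
  "opt_value = Sup (sched_value uS ` {\<tau>. true_bias_feasible uR \<mu>0 \<alpha>s \<tau>})"

lemma belief_prior: "belief \<mu>0"
  using full_support prior_sum by (simp add: belief_def less_imp_le)

lemma du_default_pos: "a' \<noteq> a0 \<Longrightarrow> 0 < du uR a0 a' \<mu>0"
  using default_strict by (simp add: du_eq_eu_diff)

lemma du_default_nonneg: "0 \<le> du uR a0 a' \<mu>0"
  using du_default_pos[of a'] by (cases "a' = a0") (auto simp: du_def)

lemma default_atom_safe:
  assumes "0 < lo" "lo \<le> hi" "hi \<le> 1" "belief y" "\<forall>a'. a' \<noteq> a0 \<longrightarrow> 0 \<le> du uR a0 a' y"
  shows "interval_safe_atoms uR \<mu>0 lo hi [(1, y, a0)]"
proof -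
  have "y \<in> regionJ uR \<mu>0 a0 lo hi"
    unfolding regionJ_def using assms(4,5) bndJ_nonpos[OF assms(1-3) du_default_nonneg]
    by (auto intro: order_trans)
  moreover have "\<mu>0 \<in> intIC uR \<mu>0 a0 lo hi"
    unfolding intIC_def using belief_prior du_default_pos bndJ_nonpos[OF assms(1-3) du_default_nonneg]
    by (auto intro: le_less_trans)
  ultimately show ?thesis by (auto simp: interval_safe_atoms_def)
qed

lemma default_scheme_feasible: "true_bias_feasible uR \<mu>0 \<alpha>s [(1, \<mu>0, a0)]"
proof -
  have bnd: "bnd uR \<mu>0 a0 a' \<alpha>s \<le> 0" for a'
    using bnd_nonpos[OF alpha_pos alpha_le_1 du_default_nonneg] .
  have "a0 \<in> relevant uR \<mu>0 \<alpha>s"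
    unfolding relevant_iff[OF alpha_pos] using belief_prior du_default_pos bnd
    by (auto intro: le_less_trans)
  moreover have "\<mu>0 \<in> region uR \<mu>0 a0 \<alpha>s"
    using belief_prior bnd du_default_nonneg by (fastforce simp: region_def intro: order_trans)
  ultimately show ?thesis by (simp add: true_bias_feasible_def is_scheme_iff)
qed

lemma bdd_above_true_bias_values: "bdd_above (sched_value uS ` {\<tau>. true_bias_feasible uR \<mu>0 \<alpha>s \<tau>})"
proof (rule bdd_aboveI2)
  fix \<tau> assume "\<tau> \<in> {\<tau>. true_bias_feasible uR \<mu>0 \<alpha>s \<tau>}"
  then show "sched_value uS \<tau> \<le> util_bound uS"
    using abs_sched_value_le[of \<mu>0 \<tau> uS]
    by (fastforce simp: true_bias_feasible_def region_def)
qed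

lemma sched_value_le_opt_value:
  "true_bias_feasible uR \<mu>0 \<alpha>s \<tau> \<Longrightarrow> sched_value uS \<tau> \<le> opt_value"
  unfolding opt_value_def using bdd_above_true_bias_values by (auto intro: cSup_upper)

lemma near_optimal_scheme_exists:
  assumes "0 < \<eta>"
  obtains \<tau> where "true_bias_feasible uR \<mu>0 \<alpha>s \<tau>" "opt_value - \<eta> < sched_value uS \<tau>"
proof -
  have "opt_value - \<eta> < Sup (sched_value uS ` {\<tau>. true_bias_feasible uR \<mu>0 \<alpha>s \<tau>})"
    using assms by (simp add: opt_value_def)
  then show ?thesis
    using that default_scheme_feasible by (subst (asm) less_cSup_iff) (auto simp: bdd_above_true_bias_values)
qed

lemma eventually_default_posterior:
  assumes "belief m"
  shows "\<forall>\<^sub>F c in at 0. belief (\<mu>0 + c *\<^sub>R (\<mu>0 - m)) \<and>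
    (\<forall>a'. a' \<noteq> a0 \<longrightarrow> 0 < du uR a0 a' (\<mu>0 + c *\<^sub>R (\<mu>0 - m)))"
proof -
  have "\<forall>\<^sub>F c in at 0. 0 < \<mu>0 $ w + c * (\<mu>0 $ w - m $ w)" for w
  proof (rule order_tendstoD(1))
    show "((\<lambda>c. \<mu>0 $ w + c * (\<mu>0 $ w - m $ w)) \<longlongrightarrow> \<mu>0 $ w + 0 * (\<mu>0 $ w - m $ w)) (at 0)"
      by (intro tendsto_intros)
  qed (simp add: full_support)
  then have "\<forall>\<^sub>F c in at 0. \<forall>w. 0 < \<mu>0 $ w + c * (\<mu>0 $ w - m $ w)"
    by (rule eventually_all_finite)
  moreover have "\<forall>\<^sub>F c in at 0. a' \<noteq> a0 \<longrightarrow>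
      0 < du uR a0 a' \<mu>0 + c * (du uR a0 a' \<mu>0 - du uR a0 a' m)" for a'
  proof (cases "a' = a0")
    case False
    have "((\<lambda>c. du uR a0 a' \<mu>0 + c * (du uR a0 a' \<mu>0 - du uR a0 a' m)) \<longlongrightarrow>
        du uR a0 a' \<mu>0 + 0 * (du uR a0 a' \<mu>0 - du uR a0 a' m)) (at 0)"
      by (intro tendsto_intros)
    then have "\<forall>\<^sub>F c in at 0. 0 < du uR a0 a' \<mu>0 + c * (du uR a0 a' \<mu>0 - du uR a0 a' m)"
      by (rule order_tendstoD(1)) (simp add: du_default_pos[OF False])
    then show ?thesis by (rule eventually_mono) simp
  qed simp
  then have "\<forall>\<^sub>F c in at 0. \<forall>a'. a' \<noteq> a0 \<longrightarrow>
      0 < du uR a0 a' \<mu>0 + c * (du uR a0 a' \<mu>0 - du uR a0 a' m)"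
    by (rule eventually_all_finite)
  ultimately show ?thesis
  proof eventually_elim
    case (elim c)
    have "(\<Sum>w\<in>UNIV. (\<mu>0 + c *\<^sub>R (\<mu>0 - m)) $ w) = 1"
      using prior_sum assms by (simp add: belief_def sum.distrib sum_subtractf sum_distrib_left[symmetric])
    with elim show ?case by (simp add: belief_def algebra_simps less_imp_le)
  qed
qed

lemma small_default_weight_exists:
  assumes "belief m" "0 < \<eta>"
  obtains s where "0 < s" "s < 1 / 2" "4 * s * util_bound uS \<le> \<eta>"
    "belief (\<mu>0 + (s - s\<^sup>2) *\<^sub>R (\<mu>0 - m))"
    "\<forall>a'. a' \<noteq> a0 \<longrightarrow> 0 \<le> du uR a0 a' (\<mu>0 + (s - s\<^sup>2) *\<^sub>R (\<mu>0 - m))"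
proof -
  have small: "\<forall>\<^sub>F s in at_right 0. 0 < s \<and> s < (1 / 2 :: real)"
    unfolding eventually_at_right_field by (auto intro!: exI[of _ "1 / 2"])
  have "filterlim (\<lambda>s. s - s\<^sup>2) (at 0) (at_right (0::real))"
  proof (rule filterlim_atI)
    show "((\<lambda>s. s - s\<^sup>2) \<longlongrightarrow> 0) (at_right (0::real))"
      by (rule tendsto_eq_intros refl)+ simp
    show "\<forall>\<^sub>F s in at_right 0. s - s\<^sup>2 \<noteq> (0::real)"
      using small by eventually_elim (auto simp: power2_eq_square)
  qed
  from eventually_compose_filterlim[OF eventually_default_posterior[OF assms(1)] this]
  have "\<forall>\<^sub>F s in at_right 0. belief (\<mu>0 + (s - s\<^sup>2) *\<^sub>R (\<mu>0 - m)) \<and>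
      (\<forall>a'. a' \<noteq> a0 \<longrightarrow> 0 < du uR a0 a' (\<mu>0 + (s - s\<^sup>2) *\<^sub>R (\<mu>0 - m)))" .
  moreover have "\<forall>\<^sub>F s in at_right 0. 4 * s * util_bound uS < \<eta>"
  proof (rule order_tendstoD(2)[OF _ assms(2)])
    show "((\<lambda>s. 4 * s * util_bound uS) \<longlongrightarrow> 0) (at_right 0)"
      by (rule tendsto_eq_intros refl)+ simp
  qed
  ultimately have "\<forall>\<^sub>F s in at_right 0. 0 < s \<and> s < 1 / 2 \<and> 4 * s * util_bound uS \<le> \<eta> \<and>
      belief (\<mu>0 + (s - s\<^sup>2) *\<^sub>R (\<mu>0 - m)) \<and>
      (\<forall>a'. a' \<noteq> a0 \<longrightarrow> 0 \<le> du uR a0 a' (\<mu>0 + (s - s\<^sup>2) *\<^sub>R (\<mu>0 - m)))"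
    using small by eventually_elim (auto intro: less_imp_le)
  then show ?thesis using that eventually_happens'[OF trivial_limit_at_right_real] by blast
qed

lemma interval_feasible_near_opt_value:
  assumes "0 < \<eta>"
  obtains \<epsilon> where "0 < \<epsilon>"
    "\<And>lo hi. 0 < lo \<Longrightarrow> lo \<le> \<alpha>s \<Longrightarrow> \<alpha>s \<le> hi \<Longrightarrow> hi \<le> 1 \<Longrightarrow> hi - lo \<le> \<epsilon> \<Longrightarrow>
       \<exists>\<sigma>. interval_feasible uR \<mu>0 lo hi \<sigma> \<and> opt_value - \<eta> \<le> sched_value uS \<sigma>"
proof -
  obtain \<tau> where \<tau>: "true_bias_feasible uR \<mu>0 \<alpha>s \<tau>" "opt_value - \<eta> / 2 < sched_value uS \<tau>"
    using near_optimal_scheme_exists[of "\<eta> / 2"] assms by auto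
  obtain n g where "0 < g" and n: "\<And>a. a \<in> relevant uR \<mu>0 \<alpha>s \<Longrightarrow>
      belief (n a) \<and> (\<forall>a'. a' \<noteq> a \<longrightarrow> bnd uR \<mu>0 a a' \<alpha>s + g \<le> du uR a a' (n a))"
    using strict_relevance_margin[OF alpha_pos] by metis
  have \<tau>_scheme: "is_scheme \<mu>0 \<tau>"
    and \<tau>_atoms: "\<forall>(p, \<nu>, a)\<in>set \<tau>. \<nu> \<in> region uR \<mu>0 a \<alpha>s \<and> belief \<nu> \<and> belief (n a) \<and>
      (\<forall>a'. a' \<noteq> a \<longrightarrow> bnd uR \<mu>0 a a' \<alpha>s + g \<le> du uR a a' (n a))"
    using \<tau>(1) n by (auto simp: true_bias_feasible_def region_def)
  define m where "m = (\<Sum>(p, \<nu>, a)\<leftarrow>\<tau>. p *\<^sub>R n a)"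
  have "belief m"
    using belief_sum_list[of "map (\<lambda>(p, \<nu>, a). (p, n a)) \<tau>"] \<tau>_scheme \<tau>_atoms
    by (fastforce simp: m_def is_scheme_iff o_def split_def)
  \<comment> \<open>Every posterior is moved a fraction t towards a strict witness of its action; the
    mean thereby drifts to (1 - t) mu0 + t m and is restored by an extra default atom of weight s.
    Taking t = s^2 keeps that atom at distance O(s) from the prior, where a0 is still strictly optimal.\<close>
  obtain s where s: "0 < s" "s < 1 / 2" "4 * s * util_bound uS \<le> \<eta> / 2"
    and y: "belief (\<mu>0 + (s - s\<^sup>2) *\<^sub>R (\<mu>0 - m))"
      "\<forall>a'. a' \<noteq> a0 \<longrightarrow> 0 \<le> du uR a0 a' (\<mu>0 + (s - s\<^sup>2) *\<^sub>R (\<mu>0 - m))"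
    using small_default_weight_exists[OF \<open>belief m\<close>, of "\<eta> / 2"] assms by auto
  define t where "t = s\<^sup>2"
  have "0 < t" "t \<le> s" using s by (auto simp: t_def power2_eq_square)
  obtain \<epsilon> where "0 < \<epsilon>" and \<epsilon>: "\<And>lo hi a a'. lo \<le> \<alpha>s \<Longrightarrow> \<alpha>s \<le> hi \<Longrightarrow> hi - lo \<le> \<epsilon> \<Longrightarrow>
      bndJ uR \<mu>0 a a' lo hi \<le> bnd uR \<mu>0 a a' \<alpha>s + t * g"
    using bndJ_le_bnd_add[OF alpha_pos, of "t * g" uR \<mu>0] \<open>0 < t\<close> \<open>0 < g\<close> by auto
  show ?thesis
  proof (rule that[OF \<open>0 < \<epsilon>\<close>])
    fix lo hi assume J: "0 < lo" "lo \<le> \<alpha>s" "\<alpha>s \<le> hi" "hi \<le> 1" "hi - lo \<le> \<epsilon>"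
    define \<sigma> where "\<sigma> = mix_schemes s (shift_posteriors t n \<tau>) [(1, \<mu>0 + (s - s\<^sup>2) *\<^sub>R (\<mu>0 - m), a0)]"
    have "is_scheme ((1 - s) *\<^sub>R ((1 - t) *\<^sub>R \<mu>0 + t *\<^sub>R m) + s *\<^sub>R (\<mu>0 + (s - s\<^sup>2) *\<^sub>R (\<mu>0 - m))) \<sigma>"
      unfolding \<sigma>_def m_def using s
      by (intro is_scheme_mix is_scheme_shift \<tau>_scheme) (auto simp: is_scheme_iff)
    moreover have "(1 - s) *\<^sub>R ((1 - t) *\<^sub>R \<mu>0 + t *\<^sub>R m) + s *\<^sub>R (\<mu>0 + (s - s\<^sup>2) *\<^sub>R (\<mu>0 - m)) = \<mu>0"
      by (simp add: t_def algebra_simps power2_eq_square)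
    moreover have "interval_safe_atoms uR \<mu>0 lo hi \<sigma>"
      unfolding \<sigma>_def using \<tau>_atoms \<epsilon>[OF J(2,3,5)] \<open>0 < g\<close> \<open>0 < t\<close> \<open>t \<le> s\<close> s(2) J y
      by (intro interval_safe_atoms_mix interval_safe_atoms_shift default_atom_safe) auto
    moreover have "sched_value uS \<tau> - 4 * s * util_bound uS \<le> sched_value uS \<sigma>"
      unfolding \<sigma>_def using \<tau>_scheme \<tau>_atoms y(1) \<open>0 < t\<close> \<open>t \<le> s\<close> s(2)
      by (intro sched_value_perturbed_ge) auto
    ultimately show "\<exists>\<sigma>. interval_feasible uR \<mu>0 lo hi \<sigma> \<and> opt_value - \<eta> \<le> sched_value uS \<sigma>"
      using \<tau>(2) s(3) by (auto simp: interval_feasible_iff)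
  qed
qed

definition slack_hull :: "((real^'w) \<times> real) set" where
  "slack_hull = convex hull (insert 0 (valued_points uS (slack_vertices uR \<mu>0 \<alpha>s)))"

lemma safe_optimizer_value_ge:
  assumes "0 < \<eta>"
  obtains \<epsilon> where "0 < \<epsilon>"
    "\<And>lo hi \<tau>. 0 < lo \<Longrightarrow> lo \<le> \<alpha>s \<Longrightarrow> \<alpha>s \<le> hi \<Longrightarrow> hi \<le> 1 \<Longrightarrow> hi - lo \<le> \<epsilon> \<Longrightarrow>
       interval_safe_vertex_opt uS uR \<mu>0 lo hi \<tau> \<Longrightarrow> opt_value - \<eta> \<le> sched_value uS \<tau>"
proof -
  obtain \<epsilon> where "0 < \<epsilon>" and \<epsilon>: "\<And>lo hi. 0 < lo \<Longrightarrow> lo \<le> \<alpha>s \<Longrightarrow> \<alpha>s \<le> hi \<Longrightarrow> hi \<le> 1 \<Longrightarrow>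
      hi - lo \<le> \<epsilon> \<Longrightarrow> \<exists>\<sigma>. interval_feasible uR \<mu>0 lo hi \<sigma> \<and> opt_value - \<eta> \<le> sched_value uS \<sigma>"
    using interval_feasible_near_opt_value[OF assms] by metis
  show ?thesis
  proof (rule that[OF \<open>0 < \<epsilon>\<close>])
    fix lo hi \<tau>
    assume J: "0 < lo" "lo \<le> \<alpha>s" "\<alpha>s \<le> hi" "hi \<le> 1" "hi - lo \<le> \<epsilon>"
      and opt: "interval_safe_vertex_opt uS uR \<mu>0 lo hi \<tau>"
    obtain \<sigma> where "interval_feasible uR \<mu>0 lo hi \<sigma>" "opt_value - \<eta> \<le> sched_value uS \<sigma>"
      using \<epsilon>[OF J] by blast
    moreover have "sched_value uS \<sigma> \<le> sched_value uS \<tau>" if "interval_feasible uR \<mu>0 lo hi \<sigma>"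
    proof -
      have "sched_value uS \<sigma> \<le> Sup (sched_value uS ` {\<sigma>. interval_feasible uR \<mu>0 lo hi \<sigma>})"
        using that by (intro cSup_upper bdd_above_interval_values) auto
      then show ?thesis using opt by (simp add: interval_safe_vertex_opt_def)
    qed
    ultimately show "opt_value - \<eta> \<le> sched_value uS \<tau>" by linarith
  qed
qed

definition informative_margin :: bool where
  "informative_margin \<longleftrightarrow> (\<exists>c>0. \<exists>\<epsilon>>0. \<forall>lo hi. 0 < lo \<and> lo \<le> \<alpha>s \<and> \<alpha>s \<le> hi \<and> hi \<le> 1 \<and> hi - lo \<le> \<epsilon> \<longrightarrow>
     (\<forall>\<tau>. interval_safe_vertex_opt uS uR \<mu>0 lo hi \<tau> \<longrightarrow> P_info_J uR \<mu>0 lo hi \<tau> \<ge> c))"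

lemma uninformative_safe_optimizer:
  assumes "\<not> informative_margin" "0 < c" "0 < \<epsilon>"
  obtains lo hi \<tau> where "0 < lo" "lo \<le> \<alpha>s" "\<alpha>s \<le> hi" "hi \<le> 1" "hi - lo \<le> \<epsilon>"
    "interval_safe_vertex_opt uS uR \<mu>0 lo hi \<tau>" "P_info_J uR \<mu>0 lo hi \<tau> < c"
proof -
  have "\<not> (\<forall>lo hi. 0 < lo \<and> lo \<le> \<alpha>s \<and> \<alpha>s \<le> hi \<and> hi \<le> 1 \<and> hi - lo \<le> \<epsilon> \<longrightarrow>
      (\<forall>\<tau>. interval_safe_vertex_opt uS uR \<mu>0 lo hi \<tau> \<longrightarrow> P_info_J uR \<mu>0 lo hi \<tau> \<ge> c))"
    using assms unfolding informative_margin_def by blast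
  then show ?thesis using that by (auto simp: not_le)
qed

lemma slack_hull_near_optimum:
  assumes "\<not> informative_margin" "0 < d"
  obtains z v where "z \<in> slack_hull" "opt_value \<le> v" "dist z (\<mu>0, v) \<le> d"
proof -
  define K where "K = util_bound uS"
  have "0 \<le> K" unfolding K_def by (rule util_bound_nonneg)
  obtain \<epsilon> where "0 < \<epsilon>" and \<epsilon>: "\<And>lo hi \<tau>. 0 < lo \<Longrightarrow> lo \<le> \<alpha>s \<Longrightarrow> \<alpha>s \<le> hi \<Longrightarrow> hi \<le> 1 \<Longrightarrow>
      hi - lo \<le> \<epsilon> \<Longrightarrow> interval_safe_vertex_opt uS uR \<mu>0 lo hi \<tau> \<Longrightarrow> opt_value - d / 2 \<le> sched_value uS \<tau>"
    using safe_optimizer_value_ge[of "d / 2"] assms(2) by auto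
  have "0 < d / (2 * (1 + K))" using assms(2) \<open>0 \<le> K\<close> by simp
  then obtain lo hi \<tau> where J: "0 < lo" "lo \<le> \<alpha>s" "\<alpha>s \<le> hi" "hi \<le> 1" "hi - lo \<le> \<epsilon>"
    and opt: "interval_safe_vertex_opt uS uR \<mu>0 lo hi \<tau>"
    and small: "P_info_J uR \<mu>0 lo hi \<tau> < d / (2 * (1 + K))"
    using uninformative_safe_optimizer[OF assms(1) _ \<open>0 < \<epsilon>\<close>] by metis
  define z where "z = scheme_point uS (filter (\<lambda>(p, \<nu>, a). \<not> informative_J uR \<mu>0 lo hi \<nu> a) \<tau>)"
  define v where "v = max (sched_value uS \<tau>) opt_value"
  have "dist z (\<mu>0, sched_value uS \<tau>) \<le> (1 + K) * P_info_J uR \<mu>0 lo hi \<tau>"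
    unfolding z_def K_def using opt
    by (intro dist_slack_part_le) (auto simp: interval_safe_vertex_opt_def extreme_point_of_def regionJ_def)
  also have "\<dots> \<le> d / 2" using small \<open>0 \<le> K\<close> by (simp add: field_simps)
  finally have "dist z (\<mu>0, sched_value uS \<tau>) \<le> d / 2" .
  moreover have "dist (\<mu>0, sched_value uS \<tau>) (\<mu>0, v) \<le> d / 2"
    using \<epsilon>[OF J opt] assms(2) by (simp add: v_def dist_Pair_Pair dist_real_def max_def)
  ultimately have "dist z (\<mu>0, v) \<le> d"
    using dist_triangle[of z "(\<mu>0, v)" "(\<mu>0, sched_value uS \<tau>)"] by linarith
  moreover have "z \<in> slack_hull"
    unfolding z_def slack_hull_def using slack_part_mem_hull[OF J(1-3) opt] .
  ultimately show ?thesis using that[of z v] by (simp add: v_def)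
qed

lemma slack_hull_meets_optimum:
  assumes "\<not> informative_margin"
  obtains v where "opt_value \<le> v" "(\<mu>0, v) \<in> slack_hull"
proof -
  let ?B = "{\<mu>0} \<times> {opt_value..}"
  have "setdist slack_hull ?B \<le> 0"
  proof (rule field_le_epsilon)
    fix d :: real assume "0 < d"
    then obtain z v where "z \<in> slack_hull" "opt_value \<le> v" "dist z (\<mu>0, v) \<le> d"
      using slack_hull_near_optimum[OF assms] by metis
    then show "setdist slack_hull ?B \<le> 0 + d"
      using setdist_le_dist[of z slack_hull "(\<mu>0, v)" ?B] by simp
  qed
  then have "setdist slack_hull ?B = 0" using setdist_pos_le[of slack_hull ?B] by linarith
  moreover have "compact slack_hull"
    unfolding slack_hull_def valued_points_def
    by (intro finite_imp_compact_convex_hull) (simp add: finite_slack_vertices)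
  moreover have "closed ?B" by (simp add: closed_Times)
  moreover have "0 \<in> slack_hull" by (simp add: slack_hull_def hull_inc)
  ultimately obtain x where "x \<in> slack_hull" "x \<in> ?B"
    using setdist_eq_0_compact_closed[of slack_hull ?B] by blast
  then show ?thesis using that by auto
qed

lemma optimal_scheme_from_slack_hull:
  assumes "opt_value \<le> v" "(\<mu>0, v) \<in> slack_hull"
  obtains \<tau> where "true_bias_optimal uS uR \<mu>0 \<alpha>s \<tau>" "P_info_alpha uR \<mu>0 \<alpha>s \<tau> = 0"
proof -
  have "\<forall>(\<nu>, a)\<in>slack_vertices uR \<mu>0 \<alpha>s. belief \<nu>"
    by (auto simp: slack_vertices_def region_def)
  then obtain \<tau> where \<tau>: "is_scheme \<mu>0 \<tau>" "\<forall>(p, x)\<in>set \<tau>. x \<in> slack_vertices uR \<mu>0 \<alpha>s"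
    "sched_value uS \<tau> = v"
    using scheme_from_convex_hull[OF finite_slack_vertices _ belief_prior] assms(2)
    unfolding slack_hull_def by metis
  have "true_bias_feasible uR \<mu>0 \<alpha>s \<tau>"
    using \<tau>(1,2) by (fastforce simp: true_bias_feasible_def slack_vertices_def)
  then have "true_bias_optimal uS uR \<mu>0 \<alpha>s \<tau>"
    using sched_value_le_opt_value assms(1) \<tau>(3)
    unfolding true_bias_optimal_def by (meson order_trans)
  moreover have "P_info_alpha uR \<mu>0 \<alpha>s \<tau> = 0"
    using \<tau>(2) by (intro P_info_alpha_eq_0) (auto simp: slack_vertices_def)
  ultimately show ?thesis using that by blast
qed

lemma informative_margin_or_uninformative_optimum:
  "informative_margin \<or> (\<exists>\<tau>. true_bias_optimal uS uR \<mu>0 \<alpha>s \<tau> \<and> P_info_alpha uR \<mu>0 \<alpha>s \<tau> = 0)"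
proof (cases informative_margin)
  case False
  then obtain v where "opt_value \<le> v" "(\<mu>0, v) \<in> slack_hull"
    by (rule slack_hull_meets_optimum)
  then obtain \<tau> where "true_bias_optimal uS uR \<mu>0 \<alpha>s \<tau>" "P_info_alpha uR \<mu>0 \<alpha>s \<tau> = 0"
    by (rule optimal_scheme_from_slack_hull)
  then show ?thesis by blast
qed simp

end

theorem proposition4p4:
  fixes \<mu>0 :: "real^'w::finite"
    and uS uR :: "'a::finite \<Rightarrow> 'w \<Rightarrow> real"
    and \<alpha>s :: real
  assumes full_support: "\<forall>w. 0 < \<mu>0 $ w"
    and prior_sum: "(\<Sum>w\<in>UNIV. \<mu>0 $ w) = 1"
    and unique_default: "\<exists>a0. {a. \<forall>a'. eu uR \<mu>0 a' \<le> eu uR \<mu>0 a} = {a0}"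
    and alpha_pos: "0 < \<alpha>s" and alpha_le1: "\<alpha>s \<le> 1"
  shows "(\<exists>c>0. \<exists>\<epsilon>>0. \<forall>lo hi. 0 < lo \<and> lo \<le> \<alpha>s \<and> \<alpha>s \<le> hi \<and> hi \<le> 1 \<and> hi - lo \<le> \<epsilon> \<longrightarrow>
            (\<forall>\<tau>. interval_safe_vertex_opt uS uR \<mu>0 lo hi \<tau> \<longrightarrow> P_info_J uR \<mu>0 lo hi \<tau> \<ge> c))
       \<or> (\<exists>\<tau>. true_bias_optimal uS uR \<mu>0 \<alpha>s \<tau> \<and> P_info_alpha uR \<mu>0 \<alpha>s \<tau> = 0)"
proof -
  obtain a0 where "{a. \<forall>a'. eu uR \<mu>0 a' \<le> eu uR \<mu>0 a} = {a0}"
    using unique_default by blast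
  with full_support prior_sum alpha_pos alpha_le1 interpret biased_persuasion \<mu>0 uS uR \<alpha>s a0
    by unfold_locales (simp_all add: less_if_unique_argmax)
  show ?thesis
    using informative_margin_or_uninformative_optimum by (simp add: informative_margin_def)
qed

end
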